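(* Assume the policies $\mathcal S$ and $\emptyset$ are unichain in $\mathcal M$ and that $\mathcal M$ is indexable. Then every Whittle index $\lambda_s$ of $\mathcal M$ satisfies $$-\|r^1-r^0\|_\infty-\tfrac12\,\mathrm{sp}(r^1)D(P^1)\|P^1-P^0\|_\infty\ \le\ \lambda_s\ \le\ \|r^1-r^0\|_\infty+\tfrac12\,\mathrm{sp}(r^0)D(P^0)\|P^1-P^0\|_\infty.$$
   Context: Setting. An MDP is $\mathcal M=(\mathcal S,\{0,1\},(P^a)_a,(r^a)_a)$, finite $\mathcal S$, row-stochastic $P^0,P^1$, rewards $r^0,r^1\in\mathbb R^{\mathcal S}$. A policy is a subset $\pi\subseteq\mathcal S$ of states where action 1 is played, inducing $P^\pi$, $r^\pi$; $\mathcal M$ is unichain if every $P^\pi$ has a single recurrent class. For $\lambda\in\mathbb R$, $\mathcal M(\lambda)$ has the same transitions and rewards $r^1-\lambda\mathbf 1$ (action 1), $r^0$ (action 0). For a unichain policy, bias $b^\pi(\lambda)$ solves $g^\pi\mathbf 1+b^\pi=r^\pi+P^\pi b^\pi$; activation advantage $\alpha^\pi_s(\lambda)=r^1_s-\lambda-r^0_s+(P^1_{s,\cdot}-P^0_{s,\cdot})\cdot b^\pi(\lambda)$. A policy is BO (bias optimal) in $\mathcal M(\lambda)$ if gain optimal and bias-maximal among gain-optimal policies; for unichain MDPs $\pi$ is BO iff $\alpha^\pi_s(\lambda)\ge0$ for $s\in\pi$ and $\le0$ for $s\notin\pi$. The optimal activation advantage $\alpha^*_s(\lambda)$ is $\alpha^\pi_s(\lambda)$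 for any BO policy $\pi$ of $\mathcal M(\lambda)$. $\mathcal M$ is indexable if for every $s$ there is $\lambda_s$ (Whittle index) with $\alpha^*_s(\lambda)>0$ for $\lambda<\lambda_s$ and $\alpha^*_s(\lambda)<0$ for $\lambda>\lambda_s$. $\mathrm{sp}(v)=\max v-\min v$; $\|v\|_\infty=\max_s|v_s|$; $\|A\|_\infty=\max_s\sum_{s'}|A_{s,s'}|$. Diameter of a unichain $P$ with recurrent class $\mathcal S_r$: $D(P)=\max_{s\in\mathcal S,s'\in\mathcal S_r}\mathbb E^P[\tau_{s,s'}]$ (expected hitting time). *)

theory Defs
  imports Complex_Main
begin

text \<open>States form a finite type 's. A transition matrix is a function 's => 's => real,
  a reward (or any) vector is a function 's => real. A policy is a set of states
  (those where action 1 is played).\<close>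

definition row_stochastic :: "('s::finite \<Rightarrow> 's \<Rightarrow> real) \<Rightarrow> bool" where
  "row_stochastic P \<longleftrightarrow> (\<forall>s t. 0 \<le> P s t) \<and> (\<forall>s. (\<Sum>t\<in>UNIV. P s t) = 1)"

definition mat_vec :: "('s::finite \<Rightarrow> 's \<Rightarrow> real) \<Rightarrow> ('s \<Rightarrow> real) \<Rightarrow> 's \<Rightarrow> real" where
  "mat_vec P v = (\<lambda>s. \<Sum>t\<in>UNIV. P s t * v t)"

definition pol_P :: "('s \<Rightarrow> 's \<Rightarrow> real) \<Rightarrow> ('s \<Rightarrow> 's \<Rightarrow> real) \<Rightarrow> 's set \<Rightarrow> 's \<Rightarrow> 's \<Rightarrow> real" where
  "pol_P P0 P1 q = (\<lambda>s. if s \<in> q then P1 s else P0 s)"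

definition pol_r :: "('s \<Rightarrow> real) \<Rightarrow> ('s \<Rightarrow> real) \<Rightarrow> real \<Rightarrow> 's set \<Rightarrow> 's \<Rightarrow> real" where
  "pol_r r0 r1 lam q = (\<lambda>s. if s \<in> q then r1 s - lam else r0 s)"

definition reach :: "('s \<Rightarrow> 's \<Rightarrow> real) \<Rightarrow> 's \<Rightarrow> 's \<Rightarrow> bool" where
  "reach P = (\<lambda>s t. 0 < P s t)\<^sup>*\<^sup>*"

definition recurrent :: "('s \<Rightarrow> 's \<Rightarrow> real) \<Rightarrow> 's \<Rightarrow> bool" where
  "recurrent P s \<longleftrightarrow> (\<forall>t. reach P s t \<longrightarrow> reach P t s)"

definition unichain :: "('s \<Rightarrow> 's \<Rightarrow> real) \<Rightarrow> bool" where
  "unichain P \<longleftrightarrow> (\<exists>s. recurrent P s) \<and>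
     (\<forall>s t. recurrent P s \<and> recurrent P t \<longrightarrow> reach P s t)"

definition gain :: "('s::finite \<Rightarrow> 's \<Rightarrow> real) \<Rightarrow> ('s \<Rightarrow> real) \<Rightarrow> 's \<Rightarrow> real" where
  "gain P r s = lim (\<lambda>T. (\<Sum>t<T. ((mat_vec P ^^ t) r) s) / real T)"

definition bias :: "('s::finite \<Rightarrow> 's \<Rightarrow> real) \<Rightarrow> ('s \<Rightarrow> real) \<Rightarrow> 's \<Rightarrow> real" where
  "bias P r s = lim (\<lambda>T. (\<Sum>k\<in>{1..T}. \<Sum>t<k. ((mat_vec P ^^ t) r) s - gain P r s) / real T)"

definition pol_gain :: "('s::finite \<Rightarrow> 's \<Rightarrow> real) \<Rightarrow> ('s \<Rightarrow> 's \<Rightarrow> real) \<Rightarrow> ('s \<Rightarrow> real) \<Rightarrow> ('s \<Rightarrow> real)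
   \<Rightarrow> real \<Rightarrow> 's set \<Rightarrow> 's \<Rightarrow> real" where
  "pol_gain P0 P1 r0 r1 lam q = gain (pol_P P0 P1 q) (pol_r r0 r1 lam q)"

definition pol_bias :: "('s::finite \<Rightarrow> 's \<Rightarrow> real) \<Rightarrow> ('s \<Rightarrow> 's \<Rightarrow> real) \<Rightarrow> ('s \<Rightarrow> real) \<Rightarrow> ('s \<Rightarrow> real)
   \<Rightarrow> real \<Rightarrow> 's set \<Rightarrow> 's \<Rightarrow> real" where
  "pol_bias P0 P1 r0 r1 lam q = bias (pol_P P0 P1 q) (pol_r r0 r1 lam q)"

definition gain_optimal where
  "gain_optimal P0 P1 r0 r1 lam q \<longleftrightarrow>
     (\<forall>q' s. pol_gain P0 P1 r0 r1 lam q' s \<le> pol_gain P0 P1 r0 r1 lam q s)"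

definition bias_optimal where
  "bias_optimal P0 P1 r0 r1 lam q \<longleftrightarrow> gain_optimal P0 P1 r0 r1 lam q \<and>
     (\<forall>q'. gain_optimal P0 P1 r0 r1 lam q' \<longrightarrow>
        (\<forall>s. pol_bias P0 P1 r0 r1 lam q' s \<le> pol_bias P0 P1 r0 r1 lam q s))"

definition act_adv where
  "act_adv P0 P1 r0 r1 lam q s = r1 s - lam - r0 s +
     (\<Sum>t\<in>UNIV. (P1 s t - P0 s t) * pol_bias P0 P1 r0 r1 lam q t)"

definition opt_act_adv where
  "opt_act_adv P0 P1 r0 r1 lam s =
     act_adv P0 P1 r0 r1 lam (SOME q. bias_optimal P0 P1 r0 r1 lam q) s"

definition is_whittle_index where
  "is_whittle_index P0 P1 r0 r1 s l \<longleftrightarrow>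
     (\<forall>lam<l. opt_act_adv P0 P1 r0 r1 lam s > 0) \<and> (\<forall>lam>l. opt_act_adv P0 P1 r0 r1 lam s < 0)"

definition indexable where
  "indexable P0 P1 r0 r1 \<longleftrightarrow> (\<forall>s. \<exists>l. is_whittle_index P0 P1 r0 r1 s l)"

definition sup_norm :: "('s::finite \<Rightarrow> real) \<Rightarrow> real" where
  "sup_norm v = Max (range (\<lambda>s. \<bar>v s\<bar>))"

definition span :: "('s::finite \<Rightarrow> real) \<Rightarrow> real" where
  "span v = Max (range v) - Min (range v)"

definition mat_norm :: "('s::finite \<Rightarrow> 's \<Rightarrow> real) \<Rightarrow> real" where
  "mat_norm A = Max (range (\<lambda>s. \<Sum>t\<in>UNIV. \<bar>A s t\<bar>))"

text \<open>Probability of not having hit s' at any of the times 0..n, starting from s;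
  expected hitting time tau_{s,s'} = min {t >= 0. X_t = s'} is sum_n P(tau > n).\<close>
fun avoid_prob :: "('s::finite \<Rightarrow> 's \<Rightarrow> real) \<Rightarrow> 's \<Rightarrow> nat \<Rightarrow> 's \<Rightarrow> real" where
  "avoid_prob P s' 0 s = (if s = s' then 0 else 1)"
| "avoid_prob P s' (Suc n) s = (if s = s' then 0 else (\<Sum>t\<in>UNIV. P s t * avoid_prob P s' n t))"

definition exp_hit_time :: "('s::finite \<Rightarrow> 's \<Rightarrow> real) \<Rightarrow> 's \<Rightarrow> 's \<Rightarrow> real" where
  "exp_hit_time P s s' = (\<Sum>n. avoid_prob P s' n s)"

definition diameter :: "('s::finite \<Rightarrow> 's \<Rightarrow> real) \<Rightarrow> real" where
  "diameter P = Max {exp_hit_time P s s' | s s'. recurrent P s'}"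

end

(* The bias b of a unichain policy solves the Poisson equation g + b = r + P b, so for a recurrent
   state rho the function b - b rho solves the hitting-time equation with cost r - g; as
   min r <= g <= max r, this gives sp(b) <= sp(r) D(P).  The activation advantage of a policy differs
   from r1 - lambda - r0 by (P1 - P0) b, which is at most ||P1 - P0|| sp(b) / 2 in absolute value
   because the rows of P1 - P0 sum to zero.  Hence above the upper bound the passive policy has
   strictly negative advantage in every state, and below the lower bound the active policy has
   strictly positive advantage everywhere.  A unichain policy whose advantages are strictly signed in
   this way is bias optimal, as one sees by comparing any other policy with its Poisson equation.  So
   the optimal advantage at s is negative above the upper bound and positive below the lower one,
   which traps the Whittle index between them.

   Gain and bias are defined as Cesaro limits.  They are computed from a decomposition
   r = k + (I - P) w with P k = k and w in the range of I - P, which exists because a bounded harmonic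
   coboundary vanishes, so that the range and the kernel of I - P meet only in 0. *)

theory Submission
  imports Defs "HOL-Analysis.Finite_Cartesian_Product"
begin

section \<open>Transition operators\<close>

lemma mat_vec_add: "mat_vec P (\<lambda>s. x s + y s) = (\<lambda>s. mat_vec P x s + mat_vec P y s)"
  by (simp add: mat_vec_def distrib_left sum.distrib)

lemma mat_vec_diff: "mat_vec P (\<lambda>s. x s - y s) = (\<lambda>s. mat_vec P x s - mat_vec P y s)"
  by (simp add: mat_vec_def right_diff_distrib sum_subtractf)

lemma mat_vec_scale: "mat_vec P (\<lambda>s. c * x s) = (\<lambda>s. c * mat_vec P x s)"
  by (simp add: mat_vec_def sum_distrib_left algebra_simps)

lemma mat_vec_uminus: "mat_vec P (\<lambda>s. - x s) = (\<lambda>s. - mat_vec P x s)"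
  by (simp add: mat_vec_def sum_negf)

lemma mat_vec_sum: "mat_vec P (\<lambda>s. \<Sum>i\<in>I. x i s) = (\<lambda>s. \<Sum>i\<in>I. mat_vec P (x i) s)"
  by (simp add: mat_vec_def sum_distrib_left sum.swap[of _ UNIV I])

lemma mat_vec_const: "row_stochastic P \<Longrightarrow> mat_vec P (\<lambda>_. c) = (\<lambda>_. c)"
  by (simp add: mat_vec_def row_stochastic_def flip: sum_distrib_right)

lemma mat_vec_mono:
  "row_stochastic P \<Longrightarrow> (\<And>t. x t \<le> y t) \<Longrightarrow> mat_vec P x s \<le> mat_vec P y s"
  unfolding mat_vec_def row_stochastic_def by (auto intro!: sum_mono mult_left_mono)

lemma mat_vec_abs_le:
  assumes "row_stochastic P" and "\<And>t. \<bar>x t\<bar> \<le> B"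
  shows "\<bar>mat_vec P x s\<bar> \<le> B"
proof -
  have "x t \<le> B" "- B \<le> x t" for t
    using assms(2)[of t] by auto
  then show ?thesis
    using mat_vec_mono[OF assms(1), of x "\<lambda>_. B" s] mat_vec_mono[OF assms(1), of "\<lambda>_. - B" x s]
      mat_vec_const[OF assms(1)] by (simp add: abs_le_iff)
qed

lemma funpow_mat_vec_add:
  "(mat_vec P ^^ n) (\<lambda>s. x s + y s) = (\<lambda>s. (mat_vec P ^^ n) x s + (mat_vec P ^^ n) y s)"
  by (induction n) (simp_all add: mat_vec_add)

lemma funpow_mat_vec_diff:
  "(mat_vec P ^^ n) (\<lambda>s. x s - y s) = (\<lambda>s. (mat_vec P ^^ n) x s - (mat_vec P ^^ n) y s)"
  by (induction n) (simp_all add: mat_vec_diff)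

lemma funpow_mat_vec_scale:
  "(mat_vec P ^^ n) (\<lambda>s. c * x s) = (\<lambda>s. c * (mat_vec P ^^ n) x s)"
  by (induction n) (simp_all add: mat_vec_scale)

lemma funpow_mat_vec_fixed: "mat_vec P k = k \<Longrightarrow> (mat_vec P ^^ n) k = k"
  by (induction n) simp_all

lemma funpow_mat_vec_mono:
  "row_stochastic P \<Longrightarrow> (\<And>t. x t \<le> y t) \<Longrightarrow> (mat_vec P ^^ n) x s \<le> (mat_vec P ^^ n) y s"
  by (induction n arbitrary: s) (simp_all add: mat_vec_mono)

lemma funpow_mat_vec_abs_le:
  "row_stochastic P \<Longrightarrow> (\<And>t. \<bar>x t\<bar> \<le> B) \<Longrightarrow> \<bar>(mat_vec P ^^ n) x s\<bar> \<le> B"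
  by (induction n arbitrary: s) (simp_all add: mat_vec_abs_le)

lemma funpow_mat_vec_diff_abs_le:
  assumes "row_stochastic P" and "\<And>t. \<bar>x t\<bar> \<le> B"
  shows "\<bar>(mat_vec P ^^ m) x s - (mat_vec P ^^ n) x s\<bar> \<le> 2 * B"
  using funpow_mat_vec_abs_le[where x = x, OF assms, of m s]
    funpow_mat_vec_abs_le[where x = x, OF assms, of n s]
  by (auto simp: abs_le_iff)

lemma sum_funpow_mat_vec_telescope:
  "(\<Sum>t<T. (mat_vec P ^^ t) (\<lambda>s. w s - mat_vec P w s) s) = w s - (mat_vec P ^^ T) w s"
  by (induction T) (simp_all add: funpow_mat_vec_diff funpow_swap1)

lemma ex_abs_bound: "\<exists>B. \<forall>t. \<bar>(x::'s::finite \<Rightarrow> real) t\<bar> \<le> B"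
  by (rule exI[of _ "Max (range (\<lambda>t. \<bar>x t\<bar>))"]) auto

section \<open>Gain and bias as Cesaro limits\<close>

lemma range_kernel_decomposition:
  fixes F :: "'a::euclidean_space \<Rightarrow> 'a"
  assumes lin: "linear F" and trivial: "\<And>v. v \<in> range F \<Longrightarrow> F v = 0 \<Longrightarrow> v = 0"
  shows "\<exists>k y. F k = 0 \<and> x = k + F (F y)"
proof -
  have subspace: "subspace (range F)"
    using linear_subspace_image[OF lin subspace_UNIV] by simp
  have span: "real_vector.span (range F) = range F"
    using subspace real_vector.span_eq_iff by blast
  have "inj_on F (real_vector.span (range F))"
    unfolding span
  proof (rule inj_onI)
    fix a b assume "a \<in> range F" "b \<in> range F" "F a = F b"
    then obtain ya yb where "a = F ya" "b = F yb" by blast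
    then have "a - b = F (ya - yb)" using lin by (simp add: linear_diff)
    moreover have "F (a - b) = 0" using \<open>F a = F b\<close> lin by (simp add: linear_diff)
    ultimately have "a - b = 0" using trivial by blast
    then show "a = b" by simp
  qed
  then have "dim (F ` range F) = dim (range F)"
    by (rule dim_image_eq[OF lin])
  then have image_eq: "F ` range F = range F"
    using subspace_dim_equal[OF linear_subspace_image[OF lin subspace] subspace] by auto
  have "F x \<in> F ` F ` range F"
    unfolding image_eq by (rule rangeI)
  then obtain y where "F x = F (F (F y))" by blast
  then have "F (x - F (F y)) = 0" using lin by (simp add: linear_diff)
  then show ?thesis by (intro exI[of _ "x - F (F y)"] exI[of _ y]) simp
qed

lemma harmonic_coboundary_eq_0:
  assumes P: "row_stochastic P" and harmonic: "mat_vec P k = k"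
    and coboundary: "k = (\<lambda>s. y s - mat_vec P y s)"
  shows "k s = 0"
proof (rule ccontr)
  assume "k s \<noteq> 0"
  obtain B where B: "\<And>t. \<bar>y t\<bar> \<le> B" using ex_abs_bound by blast
  \<comment> \<open>Summing the first \<open>T\<close> iterates of \<open>k\<close> gives \<open>T k\<close>, but also a telescoping sum bounded by \<open>2 B\<close>.\<close>
  have bounded: "\<bar>real T * k s\<bar> \<le> 2 * B" for T
  proof -
    have "real T * k s = (\<Sum>t<T. (mat_vec P ^^ t) k s)"
      using funpow_mat_vec_fixed[OF harmonic] by simp
    also have "\<dots> = y s - (mat_vec P ^^ T) y s"
      unfolding coboundary by (rule sum_funpow_mat_vec_telescope)
    finally show ?thesis
      using funpow_mat_vec_diff_abs_le[where x = y, OF P B, of 0 s T] by simp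
  qed
  obtain T :: nat where "real T > 2 * B / \<bar>k s\<bar>" using reals_Archimedean2 by blast
  then have "real T * \<bar>k s\<bar> > 2 * B" using \<open>k s \<noteq> 0\<close> by (simp add: field_simps)
  moreover have "\<bar>real T * k s\<bar> = real T * \<bar>k s\<bar>" by (simp add: abs_mult)
  ultimately show False using bounded[of T] by linarith
qed

lemma harmonic_coboundary_decomposition:
  fixes P :: "'s::finite \<Rightarrow> 's \<Rightarrow> real"
  assumes P: "row_stochastic P"
  obtains k w z where "mat_vec P k = k" and "w = (\<lambda>s. z s - mat_vec P z s)"
    and "x = (\<lambda>s. k s + (w s - mat_vec P w s))"
proof -
  define F :: "real^'s \<Rightarrow> real^'s" where "F v = (\<chi> s. v $ s - mat_vec P (($) v) s)" for v
  have lin: "linear F"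
    unfolding F_def
    by (rule linearI) (simp_all add: vec_eq_iff mat_vec_def algebra_simps sum.distrib sum_distrib_left)
  have "v = 0" if in_range: "v \<in> range F" and in_kernel: "F v = 0" for v
  proof -
    obtain y where y: "v = F y" using in_range by blast
    have "mat_vec P (($) v) = ($) v"
      using in_kernel by (simp add: F_def vec_eq_iff fun_eq_iff)
    moreover have "($) v = (\<lambda>s. y $ s - mat_vec P (($) y) s)"
      using y by (simp add: F_def fun_eq_iff)
    ultimately show ?thesis
      using harmonic_coboundary_eq_0[OF P] by (metis vec_eq_iff zero_index)
  qed
  then obtain k y where k: "F k = 0" and x: "vec_lambda x = k + F (F y)"
    using range_kernel_decomposition[OF lin] by blast
  show ?thesis
  proof (rule that)
    show "mat_vec P (($) k) = ($) k"
      using k by (simp add: F_def vec_eq_iff fun_eq_iff)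
    show "($) (F y) = (\<lambda>s. y $ s - mat_vec P (($) y) s)"
      by (simp add: F_def fun_eq_iff)
    show "x = (\<lambda>s. k $ s + (F y $ s - mat_vec P (($) (F y)) s))"
      using x by (simp add: F_def vec_eq_iff fun_eq_iff)
  qed
qed

lemma bounded_div_real_LIMSEQ_0:
  assumes "\<And>T. \<bar>f T\<bar> \<le> (B::real)"
  shows "(\<lambda>T. f T / real T) \<longlonglongrightarrow> 0"
proof (rule tendsto_sandwich[where f = "\<lambda>T. - B / real T" and h = "\<lambda>T. B / real T"])
  show "\<forall>\<^sub>F T in sequentially. - B / real T \<le> f T / real T"
    using assms by (intro always_eventually allI divide_right_mono) (auto simp: abs_le_iff minus_le_iff)
  show "\<forall>\<^sub>F T in sequentially. f T / real T \<le> B / real T"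
    using assms by (intro always_eventually allI divide_right_mono) (auto simp: abs_le_iff)
  show "(\<lambda>T. - B / real T) \<longlonglongrightarrow> 0" "(\<lambda>T. B / real T) \<longlonglongrightarrow> 0"
    using lim_const_over_n[of "- B"] lim_const_over_n[of B] by simp_all
qed

lemma sum_funpow_mat_vec_decomposition:
  assumes "mat_vec P k = k" and "x = (\<lambda>s. k s + (w s - mat_vec P w s))"
  shows "(\<Sum>t<T. (mat_vec P ^^ t) x s) = real T * k s + (w s - (mat_vec P ^^ T) w s)"
  using assms by (simp add: funpow_mat_vec_add funpow_mat_vec_fixed sum.distrib sum_funpow_mat_vec_telescope)

lemma gain_LIMSEQ_decomposition:
  assumes P: "row_stochastic P" and harmonic: "mat_vec P k = k"
    and x: "x = (\<lambda>s. k s + (w s - mat_vec P w s))"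
  shows "(\<lambda>T. (\<Sum>t<T. (mat_vec P ^^ t) x s) / real T) \<longlonglongrightarrow> k s"
proof -
  obtain B where B: "\<And>t. \<bar>w t\<bar> \<le> B" using ex_abs_bound by blast
  have "\<bar>w s - (mat_vec P ^^ T) w s\<bar> \<le> 2 * B" for T
    using funpow_mat_vec_diff_abs_le[where x = w, OF P B, of 0 s T] by simp
  then have "(\<lambda>T. k s + (w s - (mat_vec P ^^ T) w s) / real T) \<longlonglongrightarrow> k s + 0"
    by (intro tendsto_add tendsto_const bounded_div_real_LIMSEQ_0)
  moreover have "\<forall>\<^sub>F T in sequentially. k s + (w s - (mat_vec P ^^ T) w s) / real T
      = (\<Sum>t<T. (mat_vec P ^^ t) x s) / real T"
    using eventually_gt_at_top[of 0]
    by eventually_elim (simp add: sum_funpow_mat_vec_decomposition[OF harmonic x] field_simps)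
  ultimately have "(\<lambda>T. (\<Sum>t<T. (mat_vec P ^^ t) x s) / real T) \<longlonglongrightarrow> k s + 0"
    by (rule Lim_transform_eventually)
  then show ?thesis by simp
qed

lemma gain_eqI:
  assumes "row_stochastic P" and "mat_vec P k = k" and "x = (\<lambda>s. k s + (w s - mat_vec P w s))"
  shows "gain P x = k"
  unfolding gain_def using gain_LIMSEQ_decomposition[OF assms] by (simp add: limI fun_eq_iff)

lemma bias_LIMSEQ_decomposition:
  assumes P: "row_stochastic P" and harmonic: "mat_vec P k = k"
    and x: "x = (\<lambda>s. k s + (w s - mat_vec P w s))" and w: "w = (\<lambda>s. z s - mat_vec P z s)"
  shows "(\<lambda>T. (\<Sum>m\<in>{1..T}. \<Sum>t<m. (mat_vec P ^^ t) x s - gain P x s) / real T) \<longlonglongrightarrow> w s"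
proof -
  have inner: "(\<Sum>t<m. (mat_vec P ^^ t) x s - gain P x s) = w s - (mat_vec P ^^ m) w s" for m
    using sum_funpow_mat_vec_decomposition[OF harmonic x, where T = m] gain_eqI[OF P harmonic x]
    by (simp add: sum_subtractf)
  have shift: "(mat_vec P ^^ m) w s = (mat_vec P ^^ m) z s - (mat_vec P ^^ Suc m) z s" for m
    unfolding w by (simp add: funpow_mat_vec_diff funpow_swap1)
  have outer: "(\<Sum>m\<in>{1..T}. w s - (mat_vec P ^^ m) w s)
      = real T * w s - ((mat_vec P ^^ 1) z s - (mat_vec P ^^ Suc T) z s)" for T
  proof (induction T)
    case (Suc T)
    have "{1..Suc T} = insert (Suc T) {1..T}" by auto
    then show ?case using Suc by (simp add: shift algebra_simps)
  qed simp
  have total: "(\<Sum>m\<in>{1..T}. \<Sum>t<m. (mat_vec P ^^ t) x s - gain P x s)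
      = real T * w s - ((mat_vec P ^^ 1) z s - (mat_vec P ^^ Suc T) z s)" for T
    unfolding inner by (rule outer)
  obtain B where B: "\<And>t. \<bar>z t\<bar> \<le> B" using ex_abs_bound by blast
  have "\<bar>(mat_vec P ^^ 1) z s - (mat_vec P ^^ Suc T) z s\<bar> \<le> 2 * B" for T
    using funpow_mat_vec_diff_abs_le[where x = z, OF P B, of 1 s "Suc T"] by simp
  then have "(\<lambda>T. w s - ((mat_vec P ^^ 1) z s - (mat_vec P ^^ Suc T) z s) / real T) \<longlonglongrightarrow> w s - 0"
    by (intro tendsto_diff tendsto_const bounded_div_real_LIMSEQ_0)
  moreover have "\<forall>\<^sub>F T in sequentially. w s - ((mat_vec P ^^ 1) z s - (mat_vec P ^^ Suc T) z s) / real T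
      = (\<Sum>m\<in>{1..T}. \<Sum>t<m. (mat_vec P ^^ t) x s - gain P x s) / real T"
    using eventually_gt_at_top[of 0]
    by eventually_elim (simp only: total, simp add: diff_divide_distrib)
  ultimately have "(\<lambda>T. (\<Sum>m\<in>{1..T}. \<Sum>t<m. (mat_vec P ^^ t) x s - gain P x s) / real T)
      \<longlonglongrightarrow> w s - 0"
    by (rule Lim_transform_eventually)
  then show ?thesis by simp
qed

lemma bias_eqI:
  assumes "row_stochastic P" and "mat_vec P k = k"
    and "x = (\<lambda>s. k s + (w s - mat_vec P w s))" and "w = (\<lambda>s. z s - mat_vec P z s)"
  shows "bias P x = w"
  unfolding bias_def using bias_LIMSEQ_decomposition[OF assms] by (simp add: limI fun_eq_iff)

lemma gain_bias_decomposition: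
  fixes P :: "'s::finite \<Rightarrow> 's \<Rightarrow> real"
  assumes P: "row_stochastic P"
  shows "mat_vec P (gain P x) = gain P x"
    and "\<exists>z. bias P x = (\<lambda>s. z s - mat_vec P z s)"
    and "x = (\<lambda>s. gain P x s + (bias P x s - mat_vec P (bias P x) s))"
proof -
  obtain k w z where k: "mat_vec P k = k" and w: "w = (\<lambda>s. z s - mat_vec P z s)"
    and x: "x = (\<lambda>s. k s + (w s - mat_vec P w s))"
    using harmonic_coboundary_decomposition[OF P] .
  have "gain P x = k" and "bias P x = w"
    using gain_eqI[OF P k x] bias_eqI[OF P k x w] by simp_all
  with k w x show "mat_vec P (gain P x) = gain P x"
    and "\<exists>z. bias P x = (\<lambda>s. z s - mat_vec P z s)"
    and "x = (\<lambda>s. gain P x s + (bias P x s - mat_vec P (bias P x) s))"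
    by auto
qed

lemma poisson_equation:
  fixes P :: "'s::finite \<Rightarrow> 's \<Rightarrow> real"
  assumes "row_stochastic P"
  shows "gain P x s + bias P x s = x s + mat_vec P (bias P x) s"
  using gain_bias_decomposition(3)[OF assms, of x] by (simp add: fun_eq_iff)

lemma gain_LIMSEQ:
  fixes P :: "'s::finite \<Rightarrow> 's \<Rightarrow> real"
  assumes P: "row_stochastic P"
  shows "(\<lambda>T. (\<Sum>t<T. (mat_vec P ^^ t) x s) / real T) \<longlonglongrightarrow> gain P x s"
  using gain_LIMSEQ_decomposition[OF P gain_bias_decomposition(1,3)[OF P]] .

lemma bias_LIMSEQ:
  fixes P :: "'s::finite \<Rightarrow> 's \<Rightarrow> real"
  assumes P: "row_stochastic P"
  shows "(\<lambda>T. (\<Sum>m\<in>{1..T}. \<Sum>t<m. (mat_vec P ^^ t) x s - gain P x s) / real T) \<longlonglongrightarrow> bias P x s"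
proof -
  obtain z where "bias P x = (\<lambda>s. z s - mat_vec P z s)"
    using gain_bias_decomposition(2)[OF P] by blast
  then show ?thesis
    using bias_LIMSEQ_decomposition[OF P gain_bias_decomposition(1,3)[OF P]] by blast
qed

lemma gain_lincomb:
  fixes P :: "'s::finite \<Rightarrow> 's \<Rightarrow> real"
  assumes P: "row_stochastic P"
  shows "gain P (\<lambda>s. a * x s + b * y s) s = a * gain P x s + b * gain P y s"
proof -
  have "(\<Sum>t<T. (mat_vec P ^^ t) (\<lambda>s. a * x s + b * y s) s) / real T
      = a * ((\<Sum>t<T. (mat_vec P ^^ t) x s) / real T) + b * ((\<Sum>t<T. (mat_vec P ^^ t) y s) / real T)" for T
    by (simp add: funpow_mat_vec_add funpow_mat_vec_scale sum.distrib sum_distrib_left add_divide_distrib)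
  then have "(\<lambda>T. (\<Sum>t<T. (mat_vec P ^^ t) (\<lambda>s. a * x s + b * y s) s) / real T)
      \<longlonglongrightarrow> a * gain P x s + b * gain P y s"
    using tendsto_add[OF tendsto_mult_left tendsto_mult_left, OF gain_LIMSEQ[OF P] gain_LIMSEQ[OF P]]
    by simp
  then show ?thesis using gain_LIMSEQ[OF P] LIMSEQ_unique by blast
qed

lemma gain_add:
  "row_stochastic P \<Longrightarrow> gain P (\<lambda>s. x s + y s) s = gain P x s + gain P y s"
  using gain_lincomb[of P 1 x 1 y s] by simp

lemma gain_diff:
  "row_stochastic P \<Longrightarrow> gain P (\<lambda>s. x s - y s) s = gain P x s - gain P y s"
  using gain_lincomb[of P 1 x "- 1" y s] by simp

lemma gain_scale:
  "row_stochastic P \<Longrightarrow> gain P (\<lambda>s. c * x s) s = c * gain P x s"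
  using gain_lincomb[of P c x 0 x s] by simp

lemma gain_const:
  assumes "row_stochastic P"
  shows "gain P (\<lambda>_. c) s = c"
proof -
  have "gain P (\<lambda>_. c) = (\<lambda>_. c)"
    by (rule gain_eqI[where w = "\<lambda>_. 0"]) (simp_all add: assms mat_vec_const)
  then show ?thesis by simp
qed

lemma gain_coboundary:
  assumes "row_stochastic P"
  shows "gain P (\<lambda>s. w s - mat_vec P w s) s = 0"
proof -
  have "gain P (\<lambda>s. w s - mat_vec P w s) = (\<lambda>_. 0)"
    by (rule gain_eqI[where w = w]) (simp_all add: assms mat_vec_const)
  then show ?thesis by simp
qed

lemma gain_mono:
  fixes P :: "'s::finite \<Rightarrow> 's \<Rightarrow> real"
  assumes P: "row_stochastic P" and "\<And>t. x t \<le> y t"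
  shows "gain P x s \<le> gain P y s"
proof -
  have "(\<Sum>t<T. (mat_vec P ^^ t) x s) / real T \<le> (\<Sum>t<T. (mat_vec P ^^ t) y s) / real T" for T
    by (intro divide_right_mono sum_mono funpow_mat_vec_mono[OF assms]) simp
  then show ?thesis
    by (intro LIMSEQ_le[OF gain_LIMSEQ[OF P] gain_LIMSEQ[OF P]]) auto
qed

lemma gain_eq_0_if_dominated:
  fixes P :: "'s::finite \<Rightarrow> 's \<Rightarrow> real"
  assumes P: "row_stochastic P" and u: "\<And>t. 0 \<le> u t" and "gain P u s = 0"
    and support: "\<And>t. u t = 0 \<Longrightarrow> d t = 0"
  shows "gain P d s = 0"
proof -
  define C where "C = Max (range (\<lambda>t. \<bar>d t\<bar> / u t))"
  have dominated: "\<bar>d t\<bar> \<le> C * u t" for t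
  proof (cases "u t = 0")
    case False
    then have "0 < u t" using u[of t] by simp
    moreover have "\<bar>d t\<bar> / u t \<le> C" unfolding C_def by simp
    ultimately show ?thesis by (simp add: divide_le_eq)
  qed (simp add: support)
  have lower: "(- C) * u t \<le> d t" and upper: "d t \<le> C * u t" for t
    using dominated[of t] by (auto simp: abs_le_iff)
  have "gain P (\<lambda>t. (- C) * u t) s \<le> gain P d s"
    by (rule gain_mono[OF P]) (rule lower)
  moreover have "gain P d s \<le> gain P (\<lambda>t. C * u t) s"
    by (rule gain_mono[OF P]) (rule upper)
  moreover have "gain P (\<lambda>t. c * u t) s = 0" for c
    unfolding gain_scale[OF P] \<open>gain P u s = 0\<close> by (rule mult_zero_right)
  ultimately show ?thesis by (metis order_antisym)
qed

lemma bias_lincomb: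
  fixes P :: "'s::finite \<Rightarrow> 's \<Rightarrow> real"
  assumes P: "row_stochastic P"
  shows "bias P (\<lambda>s. a * x s + b * y s) s = a * bias P x s + b * bias P y s"
proof -
  let ?S = "\<lambda>x T. (\<Sum>m\<in>{1..T}. \<Sum>t<m. (mat_vec P ^^ t) x s - gain P x s) / real T"
  have "(mat_vec P ^^ t) (\<lambda>s. a * x s + b * y s) s - gain P (\<lambda>s. a * x s + b * y s) s
      = a * ((mat_vec P ^^ t) x s - gain P x s) + b * ((mat_vec P ^^ t) y s - gain P y s)" for t
    by (simp add: funpow_mat_vec_add funpow_mat_vec_scale gain_lincomb[OF P] algebra_simps)
  then have "?S (\<lambda>s. a * x s + b * y s) T = a * ?S x T + b * ?S y T" for T
    by (simp add: sum.distrib sum_distrib_left add_divide_distrib)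
  then have "(\<lambda>T. ?S (\<lambda>s. a * x s + b * y s) T) \<longlonglongrightarrow> a * bias P x s + b * bias P y s"
    using tendsto_add[OF tendsto_mult_left tendsto_mult_left, OF bias_LIMSEQ[OF P] bias_LIMSEQ[OF P]]
    by simp
  then show ?thesis using bias_LIMSEQ[OF P] LIMSEQ_unique by blast
qed

lemma bias_add:
  "row_stochastic P \<Longrightarrow> bias P (\<lambda>s. x s + y s) s = bias P x s + bias P y s"
  using bias_lincomb[of P 1 x 1 y s] by simp

lemma bias_diff:
  "row_stochastic P \<Longrightarrow> bias P (\<lambda>s. x s - y s) s = bias P x s - bias P y s"
  using bias_lincomb[of P 1 x "- 1" y s] by simp

lemma bias_const:
  assumes "row_stochastic P"
  shows "bias P (\<lambda>_. c) s = 0"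
proof -
  have "bias P (\<lambda>_. c) = (\<lambda>_. 0)"
    by (rule bias_eqI[where k = "\<lambda>_. c" and z = "\<lambda>_. 0"]) (simp_all add: assms mat_vec_const)
  then show ?thesis by simp
qed

lemma bias_coboundary:
  fixes P :: "'s::finite \<Rightarrow> 's \<Rightarrow> real"
  assumes P: "row_stochastic P"
  shows "bias P (\<lambda>s. w s - mat_vec P w s) s = w s - gain P w s"
proof -
  define g b where "g = gain P w" and "b = bias P w"
  have harmonic: "mat_vec P g = g" and w: "w = (\<lambda>s. g s + (b s - mat_vec P b s))"
    unfolding g_def b_def by (fact gain_bias_decomposition(1,3)[OF P])+
  \<comment> \<open>The harmonic part \<open>g\<close> of \<open>w\<close> is annihilated by \<open>I - P\<close>.\<close>
  have "(\<lambda>s. w s - mat_vec P w s) = (\<lambda>s. 0 + (b s - mat_vec P b s) - mat_vec P (\<lambda>s. b s - mat_vec P b s) s)"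
    by (subst (1 2) w) (simp add: mat_vec_add mat_vec_diff harmonic fun_eq_iff)
  then have "bias P (\<lambda>s. w s - mat_vec P w s) = (\<lambda>s. b s - mat_vec P b s)"
    by (intro bias_eqI[OF P, where k = "\<lambda>_. 0" and z = b]) (simp_all add: mat_vec_const P)
  moreover have "w s - g s = b s - mat_vec P b s"
    by (subst w) simp
  ultimately show ?thesis unfolding g_def by simp
qed

lemma bias_nonneg:
  fixes P :: "'s::finite \<Rightarrow> 's \<Rightarrow> real"
  assumes P: "row_stochastic P" and u: "\<And>t. 0 \<le> u t" and gain: "\<And>t. gain P u t = 0"
  shows "0 \<le> bias P u s"
proof (rule LIMSEQ_le_const[OF bias_LIMSEQ[OF P]])
  have "0 \<le> (mat_vec P ^^ t) u s" for t
    using funpow_mat_vec_mono[OF P, of "\<lambda>_. 0" u t s] u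
    by (simp add: funpow_mat_vec_fixed mat_vec_const P)
  then show "\<exists>N. \<forall>T\<ge>N. 0 \<le> (\<Sum>m\<in>{1..T}. \<Sum>t<m. (mat_vec P ^^ t) u s - gain P u s) / real T"
    by (auto simp: gain intro!: sum_nonneg divide_nonneg_nonneg)
qed

section \<open>Unichain transition matrices\<close>

lemma reach_trans: "reach P a b \<Longrightarrow> reach P b c \<Longrightarrow> reach P a c"
  unfolding reach_def by (rule rtranclp_trans)

lemma reach_recurrent:
  fixes P :: "'s::finite \<Rightarrow> 's \<Rightarrow> real"
  shows "\<exists>t. reach P s t \<and> recurrent P t"
proof (induction s rule: measure_induct_rule[where f = "\<lambda>s. card {t. reach P s t}"])
  case (less s)
  show ?case
  proof (cases "recurrent P s")
    case True
    then show ?thesis by (auto simp: reach_def)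
  next
    case False
    then obtain v where sv: "reach P s v" and "\<not> reach P v s"
      unfolding recurrent_def by blast
    \<comment> \<open>Moving to \<open>v\<close> strictly shrinks the set of reachable states, since \<open>s\<close> is lost.\<close>
    then have "{t. reach P v t} \<subset> {t. reach P s t}"
      using sv by (auto simp: reach_def)
    then have "card {t. reach P v t} < card {t. reach P s t}"
      by (rule psubset_card_mono[OF finite])
    then obtain t where "reach P v t" "recurrent P t" using less by blast
    with sv show ?thesis by (blast intro: reach_trans)
  qed
qed

lemma unichain_common_target:
  fixes P :: "'s::finite \<Rightarrow> 's \<Rightarrow> real"
  assumes "unichain P"
  obtains \<rho> where "recurrent P \<rho>" and "\<And>s. reach P s \<rho>"
proof -
  from assms obtain \<rho> where \<rho>: "recurrent P \<rho>"
    and connected: "\<And>s t. recurrent P s \<Longrightarrow> recurrent P t \<Longrightarrow> reach P s t"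
    unfolding unichain_def by blast
  have "reach P s \<rho>" for s
  proof -
    obtain t where "reach P s t" "recurrent P t" using reach_recurrent by blast
    with connected[OF _ \<rho>] show ?thesis by (blast intro: reach_trans)
  qed
  with \<rho> show thesis by (rule that)
qed

lemma harmonic_le_at_common_target:
  fixes P :: "'s::finite \<Rightarrow> 's \<Rightarrow> real"
  assumes P: "row_stochastic P" and harmonic: "mat_vec P k = k" and target: "\<And>s. reach P s \<rho>"
  shows "k s \<le> k \<rho>"
proof -
  define M where "M = Max (range k)"
  have le_M: "k t \<le> M" for t unfolding M_def by simp
  have "M \<in> range k" unfolding M_def by (rule Max_in) auto
  then obtain s0 where s0: "k s0 = M" by auto
  have step: "k b = M" if "k a = M" and "0 < P a b" for a b
  proof (rule ccontr)
    assume "k b \<noteq> M"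
    with le_M[of b] have "0 < P a b * (M - k b)" using \<open>0 < P a b\<close> by simp
    also have "\<dots> \<le> (\<Sum>t\<in>UNIV. P a t * (M - k t))"
      by (rule member_le_sum) (use P le_M in \<open>auto simp: row_stochastic_def\<close>)
    also have "\<dots> = M * (\<Sum>t\<in>UNIV. P a t) - mat_vec P k a"
      by (simp add: mat_vec_def algebra_simps sum_subtractf sum_distrib_left)
    also have "\<dots> = 0"
      using P fun_cong[OF harmonic, of a] \<open>k a = M\<close> by (simp add: row_stochastic_def)
    finally show False by simp
  qed
  have "k b = M" if "reach P a b" and "k a = M" for a b
    using that unfolding reach_def by (induction rule: rtranclp_induct) (use step in auto)
  then show ?thesis using target s0 le_M by metis
qed

lemma harmonic_const_at_common_target:
  fixes P :: "'s::finite \<Rightarrow> 's \<Rightarrow> real"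
  assumes P: "row_stochastic P" and harmonic: "mat_vec P k = k" and target: "\<And>s. reach P s \<rho>"
  shows "k s = k \<rho>"
proof -
  have "mat_vec P (\<lambda>s. - k s) = (\<lambda>s. - k s)"
    by (simp add: mat_vec_uminus harmonic)
  then show ?thesis
    using harmonic_le_at_common_target[OF P _ target] harmonic by (metis neg_le_iff_le order_antisym)
qed

lemma poisson_equation_unichain:
  fixes P :: "'s::finite \<Rightarrow> 's \<Rightarrow> real"
  assumes P: "row_stochastic P" and "unichain P"
  obtains g where "\<And>s. gain P x s = g" and "\<And>s. g + bias P x s = x s + mat_vec P (bias P x) s"
proof -
  obtain \<rho> where "\<And>s. reach P s \<rho>" using unichain_common_target[OF assms(2)] by blast
  then have "gain P x s = gain P x \<rho>" for s
    using harmonic_const_at_common_target[OF P gain_bias_decomposition(1)[OF P]] by blast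
  then show thesis using poisson_equation[OF P] that by metis
qed

section \<open>Hitting times and the span of the bias\<close>

lemma avoid_prob_Suc_eq [simp]:
  "avoid_prob P \<rho> (Suc n) s = (if s = \<rho> then 0 else mat_vec P (avoid_prob P \<rho> n) s)"
  by (simp add: mat_vec_def)

declare avoid_prob.simps(2) [simp del]

lemma avoid_prob_target [simp]: "avoid_prob P \<rho> n \<rho> = 0"
  by (cases n) auto

lemma avoid_prob_bounds:
  assumes P: "row_stochastic P"
  shows "0 \<le> avoid_prob P \<rho> n s \<and> avoid_prob P \<rho> n s \<le> 1"
proof (induction n arbitrary: s)
  case (Suc n)
  then show ?case
    using mat_vec_mono[OF P, of "\<lambda>_. 0" "avoid_prob P \<rho> n" s]
      mat_vec_mono[OF P, of "avoid_prob P \<rho> n" "\<lambda>_. 1" s]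
    by (simp add: mat_vec_const[OF P])
qed simp

lemma decseq_avoid_prob:
  assumes P: "row_stochastic P"
  shows "decseq (\<lambda>n. avoid_prob P \<rho> n s)"
proof -
  have "avoid_prob P \<rho> (Suc n) s \<le> avoid_prob P \<rho> n s" for n
  proof (induction n arbitrary: s)
    case 0
    then show ?case using avoid_prob_bounds[OF P, of \<rho> 1 s] by auto
  next
    case (Suc n)
    then show ?case
      using mat_vec_mono[OF P, of "avoid_prob P \<rho> (Suc n)" "avoid_prob P \<rho> n" s]
      by simp
  qed
  then show ?thesis by (rule decseq_SucI)
qed

lemma avoid_prob_less_1:
  assumes P: "row_stochastic P" and "reach P s \<rho>"
  shows "\<exists>n. avoid_prob P \<rho> n s < 1"
  using assms(2) unfolding reach_def
proof (induction rule: converse_rtranclp_induct)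
  case base
  show ?case by (intro exI[of _ 0]) simp
next
  case (step s t)
  then obtain n where n: "avoid_prob P \<rho> n t < 1" by blast
  show ?case
  proof (cases "s = \<rho>")
    case False
    have "0 < P s t * (1 - avoid_prob P \<rho> n t)" using step(1) n by simp
    also have "\<dots> \<le> (\<Sum>u\<in>UNIV. P s u * (1 - avoid_prob P \<rho> n u))"
      by (rule member_le_sum) (use P avoid_prob_bounds[OF P] in \<open>auto simp: row_stochastic_def\<close>)
    also have "\<dots> = 1 - avoid_prob P \<rho> (Suc n) s"
      using P False by (simp add: row_stochastic_def mat_vec_def algebra_simps sum_subtractf)
    finally show ?thesis by (intro exI[of _ "Suc n"]) simp
  qed (intro exI[of _ 0], simp)
qed

lemma avoid_prob_add_le:
  assumes P: "row_stochastic P" and \<theta>: "\<And>t. avoid_prob P \<rho> m t \<le> \<theta>"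
  shows "avoid_prob P \<rho> (n + m) s \<le> avoid_prob P \<rho> n s * \<theta>"
proof (induction n arbitrary: s)
  case 0
  then show ?case using \<theta>[of s] by (cases "s = \<rho>") simp_all
next
  case (Suc n)
  have "mat_vec P (avoid_prob P \<rho> (n + m)) s \<le> mat_vec P (\<lambda>t. \<theta> * avoid_prob P \<rho> n t) s"
    by (rule mat_vec_mono[OF P]) (use Suc in \<open>simp add: mult.commute\<close>)
  then show ?case by (simp add: mat_vec_scale mult.commute)
qed

lemma summable_if_decseq_geometric_subseq:
  fixes f :: "nat \<Rightarrow> real"
  assumes dec: "decseq f" and nonneg: "\<And>n. 0 \<le> f n" and "0 < N"
    and \<theta>: "0 \<le> \<theta>" "\<theta> < 1" and geometric: "\<And>k. f (k * N) \<le> \<theta> ^ k"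
  shows "summable f"
proof (rule summableI_nonneg_bounded[where x = "real N / (1 - \<theta>)"])
  fix K
  have "(\<Sum>i<K. f i) \<le> (\<Sum>i<K * N. f i)"
    by (rule sum_mono2) (use \<open>0 < N\<close> nonneg in auto)
  also have "\<dots> = (\<Sum>k<K. \<Sum>i\<in>{k * N..<k * N + N}. f i)"
    by (simp add: sum.nat_group)
  also have "\<dots> \<le> (\<Sum>k<K. real N * \<theta> ^ k)"
  proof (rule sum_mono)
    fix k
    have "f i \<le> \<theta> ^ k" if "i \<in> {k * N..<k * N + N}" for i
      using decseqD[OF dec, of "k * N" i] geometric[of k] that by simp
    then show "(\<Sum>i\<in>{k * N..<k * N + N}. f i) \<le> real N * \<theta> ^ k"
      using sum_mono[of "{k * N..<k * N + N}" f "\<lambda>_. \<theta> ^ k"] by simp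
  qed
  also have "\<dots> \<le> real N * (\<Sum>k. \<theta> ^ k)"
    unfolding sum_distrib_left[symmetric]
    by (intro mult_left_mono sum_le_suminf) (use \<theta> in \<open>auto intro: summable_geometric\<close>)
  also have "\<dots> = real N / (1 - \<theta>)"
    using suminf_geometric[of \<theta>] \<theta> by simp
  finally show "(\<Sum>i<K. f i) \<le> real N / (1 - \<theta>)" .
qed (rule nonneg)

lemma summable_avoid_prob:
  fixes P :: "'s::finite \<Rightarrow> 's \<Rightarrow> real"
  assumes P: "row_stochastic P" and target: "\<And>s. reach P s \<rho>"
  shows "summable (\<lambda>n. avoid_prob P \<rho> n s)"
proof -
  obtain n where n: "\<And>s. avoid_prob P \<rho> (n s) s < 1"
    using avoid_prob_less_1[OF P target] by metis
  define N where "N = Suc (Max (range n))"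
  define \<theta> where "\<theta> = Max (range (avoid_prob P \<rho> N))"
  have "avoid_prob P \<rho> N s < 1" for s
  proof -
    have "n s \<le> N" by (simp add: N_def le_SucI)
    then show ?thesis using decseqD[OF decseq_avoid_prob[OF P]] n[of s] by (meson le_less_trans)
  qed
  moreover have "\<theta> \<in> range (avoid_prob P \<rho> N)" unfolding \<theta>_def by (rule Max_in) auto
  ultimately have "\<theta> < 1" by auto
  have le_\<theta>: "avoid_prob P \<rho> N t \<le> \<theta>" for t unfolding \<theta>_def by simp
  then have "0 \<le> \<theta>" using avoid_prob_bounds[OF P] order_trans by blast
  \<comment> \<open>Every block of \<open>N\<close> steps avoids \<open>\<rho>\<close> with probability at most \<open>\<theta> < 1\<close>.\<close>
  have "avoid_prob P \<rho> (k * N) s \<le> \<theta> ^ k" for k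
  proof (induction k)
    case (Suc k)
    have "avoid_prob P \<rho> (k * N + N) s \<le> avoid_prob P \<rho> (k * N) s * \<theta>"
      by (rule avoid_prob_add_le[OF P le_\<theta>])
    also have "\<dots> \<le> \<theta> ^ k * \<theta>"
      using Suc \<open>0 \<le> \<theta>\<close> by (intro mult_right_mono) simp_all
    finally show ?case by (simp add: add.commute mult.commute)
  qed (use avoid_prob_bounds[OF P] in simp)
  then show ?thesis
    using avoid_prob_bounds[OF P] \<open>0 \<le> \<theta>\<close> \<open>\<theta> < 1\<close>
    by (intro summable_if_decseq_geometric_subseq[where N = N and \<theta> = \<theta>, OF decseq_avoid_prob[OF P]])
       (simp_all add: N_def)
qed

lemma le_exp_hit_time:
  fixes P :: "'s::finite \<Rightarrow> 's \<Rightarrow> real"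
  assumes P: "row_stochastic P" and target: "\<And>s. reach P s \<rho>"
    and h_target: "h \<rho> = 0" and h_eq: "\<And>s. s \<noteq> \<rho> \<Longrightarrow> h s = c s + mat_vec P h s"
    and c_le: "\<And>s. c s \<le> M"
  shows "h s \<le> M * exp_hit_time P s \<rho>"
proof -
  define H where "H = Max (range (\<lambda>t. \<bar>h t\<bar>))"
  have H: "\<bar>h t\<bar> \<le> H" for t unfolding H_def by simp
  \<comment> \<open>Unrolling the equation \<open>n\<close> times; the remainder is weighted by the probability of not having hit \<open>\<rho>\<close>.\<close>
  have unrolled: "h s \<le> M * (\<Sum>k<n. avoid_prob P \<rho> k s) + H * avoid_prob P \<rho> n s" for n s
  proof (induction n arbitrary: s)
    case 0
    show ?case using H[of s] h_target by (cases "s = \<rho>") auto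
  next
    case (Suc n)
    show ?case
    proof (cases "s = \<rho>")
      case False
      have "mat_vec P h s \<le> mat_vec P (\<lambda>t. M * (\<Sum>k<n. avoid_prob P \<rho> k t) + H * avoid_prob P \<rho> n t) s"
        by (rule mat_vec_mono[OF P Suc])
      then have "h s \<le> M + mat_vec P (\<lambda>t. M * (\<Sum>k<n. avoid_prob P \<rho> k t) + H * avoid_prob P \<rho> n t) s"
        using h_eq[OF False] c_le[of s] by linarith
      also have "\<dots> = M * (1 + (\<Sum>k<n. avoid_prob P \<rho> (Suc k) s)) + H * avoid_prob P \<rho> (Suc n) s"
        using False by (simp add: mat_vec_add mat_vec_scale mat_vec_sum algebra_simps)
      also have "\<dots> = M * (\<Sum>k<Suc n. avoid_prob P \<rho> k s) + H * avoid_prob P \<rho> (Suc n) s"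
        using False by (simp only: sum.lessThan_Suc_shift) simp
      finally show ?thesis .
    qed (simp add: h_target)
  qed
  have "(\<lambda>n. M * (\<Sum>k<n. avoid_prob P \<rho> k s) + H * avoid_prob P \<rho> n s) \<longlonglongrightarrow>
      M * exp_hit_time P s \<rho> + H * 0"
    unfolding exp_hit_time_def using summable_avoid_prob[OF P target]
    by (intro tendsto_add tendsto_mult_left summable_LIMSEQ summable_LIMSEQ_zero)
  then show ?thesis using unrolled by (simp add: LIMSEQ_le_const)
qed

lemma exp_hit_time_nonneg:
  fixes P :: "'s::finite \<Rightarrow> 's \<Rightarrow> real"
  assumes "row_stochastic P" and "\<And>s. reach P s \<rho>"
  shows "0 \<le> exp_hit_time P s \<rho>"
  unfolding exp_hit_time_def
  using summable_avoid_prob[OF assms] avoid_prob_bounds[OF assms(1)] by (simp add: suminf_nonneg)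

lemma exp_hit_time_le_diameter:
  fixes P :: "'s::finite \<Rightarrow> 's \<Rightarrow> real"
  assumes "recurrent P \<rho>"
  shows "exp_hit_time P s \<rho> \<le> diameter P"
proof -
  have "{exp_hit_time P s s' | s s'. recurrent P s'} \<subseteq> range (\<lambda>(s, s'). exp_hit_time P s s')"
    by auto
  then have "finite {exp_hit_time P s s' | s s'. recurrent P s'}"
    by (rule finite_subset) simp
  then show ?thesis unfolding diameter_def using assms by (intro Max_ge) blast+
qed

lemma span_le_of_poisson_equation:
  fixes P :: "'s::finite \<Rightarrow> 's \<Rightarrow> real"
  assumes P: "row_stochastic P" and "unichain P"
    and poisson: "\<And>s. g + b s = r s + mat_vec P b s"
  shows "span b \<le> span r * diameter P"
proof -
  obtain \<rho> where "recurrent P \<rho>" and target: "\<And>s. reach P s \<rho>"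
    using unichain_common_target[OF assms(2)] by blast
  define E where "E s = exp_hit_time P s \<rho>" for s
  have E: "0 \<le> E s" "E s \<le> diameter P" for s
    unfolding E_def using exp_hit_time_nonneg[OF P target] exp_hit_time_le_diameter[OF \<open>recurrent P \<rho>\<close>] by auto
  have r_le: "r s \<le> Max (range r)" and r_ge: "Min (range r) \<le> r s" for s
    by simp_all
  obtain s1 s2 where s1: "b s1 = Max (range b)" and s2: "b s2 = Min (range b)"
    using Max_in[of "range b"] Min_in[of "range b"] by (metis UNIV_not_empty finite finite_imageI image_is_empty rangeE)
  \<comment> \<open>At the extremal states of \<open>b\<close> the Poisson equation squeezes \<open>g\<close> between \<open>min r\<close> and \<open>max r\<close>.\<close>
  have "mat_vec P b s1 \<le> b s1" and "b s2 \<le> mat_vec P b s2"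
    using mat_vec_mono[OF P, of b "\<lambda>_. b s1" s1] mat_vec_mono[OF P, of "\<lambda>_. b s2" b s2] s1 s2
    by (simp_all add: mat_vec_const[OF P])
  then have g_le: "g \<le> Max (range r)" and g_ge: "Min (range r) \<le> g"
    using poisson[of s1] poisson[of s2] r_le[of s1] r_ge[of s2] by linarith+
  \<comment> \<open>\<open>b - b \<rho>\<close> solves the hitting-time equation with cost \<open>r - g\<close>, and its negative the one with cost \<open>g - r\<close>.\<close>
  define h where "h s = b s - b \<rho>" for s
  have h_target: "h \<rho> = 0" by (simp add: h_def)
  have h_eq: "h s = (r s - g) + mat_vec P h s" for s
    using poisson[of s] unfolding h_def mat_vec_diff mat_vec_const[OF P] by linarith
  have neg_h_eq: "- h s = (g - r s) + mat_vec P (\<lambda>t. - h t) s" for s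
    using h_eq[of s] by (simp add: mat_vec_uminus)
  have upper: "h s \<le> (Max (range r) - g) * E s" for s
    unfolding E_def
  proof (rule le_exp_hit_time[OF P target, where c = "\<lambda>t. r t - g"])
    show "h \<rho> = 0" by (rule h_target)
    show "h t = r t - g + mat_vec P h t" for t by (rule h_eq)
    show "r t - g \<le> Max (range r) - g" for t using r_le[of t] by simp
  qed
  have lower: "- h s \<le> (g - Min (range r)) * E s" for s
    unfolding E_def
  proof (rule le_exp_hit_time[OF P target, where c = "\<lambda>t. g - r t"])
    show "- h \<rho> = 0" by (simp add: h_target)
    show "- h t = g - r t + mat_vec P (\<lambda>t. - h t) t" for t by (rule neg_h_eq)
    show "g - r t \<le> g - Min (range r)" for t using r_ge[of t] by simp
  qed
  have "span b = h s1 - h s2"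
    unfolding span_def using s1 s2 by (simp add: h_def)
  also have "\<dots> \<le> (Max (range r) - g) * diameter P + (g - Min (range r)) * diameter P"
    using upper[of s1] lower[of s2] g_le g_ge
      mult_left_mono[OF E(2)[of s1], of "Max (range r) - g"] mult_left_mono[OF E(2)[of s2], of "g - Min (range r)"]
    by linarith
  also have "\<dots> = span r * diameter P"
    unfolding span_def by (simp add: algebra_simps)
  finally show ?thesis .
qed

lemma span_bias_le:
  fixes P :: "'s::finite \<Rightarrow> 's \<Rightarrow> real"
  assumes "row_stochastic P" and "unichain P"
  shows "span (bias P r) \<le> span r * diameter P"
proof -
  obtain g where "\<And>s. g + bias P r s = r s + mat_vec P (bias P r) s"
    using poisson_equation_unichain[OF assms] by metis
  then show ?thesis by (rule span_le_of_poisson_equation[OF assms])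
qed

section \<open>Policy comparison and bias optimality\<close>

lemma gain_bias_of_slack:
  fixes Q :: "'s::finite \<Rightarrow> 's \<Rightarrow> real"
  assumes Q: "row_stochastic Q" and r: "r = (\<lambda>s. g - u s + (w s - mat_vec Q w s))"
  shows "gain Q r s = g - gain Q u s"
    and "bias Q r s = w s - gain Q w s - bias Q u s"
proof -
  have "gain Q r s = gain Q (\<lambda>s. g - u s) s + gain Q (\<lambda>s. w s - mat_vec Q w s) s"
    unfolding r by (rule gain_add[OF Q])
  then show "gain Q r s = g - gain Q u s"
    using gain_diff[OF Q, of "\<lambda>_. g" u s] by (simp add: gain_const[OF Q] gain_coboundary[OF Q])
  have "bias Q r s = bias Q (\<lambda>s. g - u s) s + bias Q (\<lambda>s. w s - mat_vec Q w s) s"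
    unfolding r by (rule bias_add[OF Q])
  then show "bias Q r s = w s - gain Q w s - bias Q u s"
    using bias_diff[OF Q, of "\<lambda>_. g" u s] by (simp add: bias_const[OF Q] bias_coboundary[OF Q])
qed

lemma gain_le_of_poisson_supersolution:
  fixes Q :: "'s::finite \<Rightarrow> 's \<Rightarrow> real"
  assumes Q: "row_stochastic Q" and super: "\<And>s. r s + mat_vec Q w s \<le> g + w s"
  shows "gain Q r s \<le> g"
proof -
  define u where "u s = g + w s - r s - mat_vec Q w s" for s
  have u: "0 \<le> u t" for t using super[of t] by (simp add: u_def)
  have "r = (\<lambda>s. g - u s + (w s - mat_vec Q w s))" by (simp add: u_def fun_eq_iff)
  then have "gain Q r s = g - gain Q u s" by (rule gain_bias_of_slack(1)[OF Q])
  moreover have "gain Q (\<lambda>_. 0) s \<le> gain Q u s" by (rule gain_mono[OF Q u])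
  ultimately show ?thesis by (simp add: gain_const[OF Q])
qed

lemma bias_le_of_poisson_supersolution:
  fixes P Q :: "'s::finite \<Rightarrow> 's \<Rightarrow> real"
  assumes P: "row_stochastic P" and Q: "row_stochastic Q"
    and w: "w = (\<lambda>s. z s - mat_vec P z s)"
    and super: "\<And>s. r s + mat_vec Q w s \<le> g + w s"
    and tight: "\<And>s. r s + mat_vec Q w s = g + w s \<Longrightarrow> Q s = P s"
    and gain: "\<And>s. g \<le> gain Q r s"
  shows "bias Q r s \<le> w s"
proof -
  define u where "u s = g + w s - r s - mat_vec Q w s" for s
  have u: "0 \<le> u t" for t using super[of t] by (simp add: u_def)
  have r: "r = (\<lambda>s. g - u s + (w s - mat_vec Q w s))" by (simp add: u_def fun_eq_iff)
  have gain_u: "gain Q u t = 0" for t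
  proof -
    have "gain Q (\<lambda>_. 0) t \<le> gain Q u t" by (rule gain_mono[OF Q u])
    then show ?thesis using gain[of t] gain_bias_of_slack(1)[OF Q r, of t] by (simp add: gain_const[OF Q])
  qed
  \<comment> \<open>\<open>w = (I - Q) z + (Q - P) z\<close>, and the second summand vanishes wherever the slack \<open>u\<close> does.\<close>
  have "gain Q w s = gain Q (\<lambda>t. z t - mat_vec Q z t) s + gain Q (\<lambda>t. mat_vec Q z t - mat_vec P z t) s"
    unfolding w by (subst gain_add[OF Q, symmetric]) simp
  moreover have "gain Q (\<lambda>t. mat_vec Q z t - mat_vec P z t) s = 0"
  proof (rule gain_eq_0_if_dominated[OF Q u gain_u])
    show "mat_vec Q z t - mat_vec P z t = 0" if "u t = 0" for t
      using tight[of t] that by (simp add: u_def mat_vec_def)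
  qed
  ultimately have "gain Q w s = 0" by (simp add: gain_coboundary[OF Q])
  then show ?thesis
    using gain_bias_of_slack(2)[OF Q r, of s] bias_nonneg[OF Q u gain_u, of s] by simp
qed

lemma row_stochastic_pol_P:
  "row_stochastic P0 \<Longrightarrow> row_stochastic P1 \<Longrightarrow> row_stochastic (pol_P P0 P1 q)"
  unfolding row_stochastic_def pol_P_def by auto

lemma mat_vec_pol_P:
  "mat_vec (pol_P P0 P1 q) w s = (if s \<in> q then mat_vec P1 w s else mat_vec P0 w s)"
  unfolding mat_vec_def pol_P_def by simp

lemma act_adv_eq:
  "act_adv P0 P1 r0 r1 lam q s = r1 s - lam - r0 s
     + (mat_vec P1 (pol_bias P0 P1 r0 r1 lam q) s - mat_vec P0 (pol_bias P0 P1 r0 r1 lam q) s)"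
  unfolding act_adv_def mat_vec_def by (simp add: left_diff_distrib sum_subtractf)

lemma bias_optimalI:
  fixes P0 P1 :: "'s::finite \<Rightarrow> 's \<Rightarrow> real"
  assumes P0: "row_stochastic P0" and P1: "row_stochastic P1"
    and unichain: "unichain (pol_P P0 P1 \<pi>)"
    and pos: "\<And>s. s \<in> \<pi> \<Longrightarrow> act_adv P0 P1 r0 r1 lam \<pi> s > 0"
    and neg: "\<And>s. s \<notin> \<pi> \<Longrightarrow> act_adv P0 P1 r0 r1 lam \<pi> s < 0"
  shows "bias_optimal P0 P1 r0 r1 lam \<pi>"
proof -
  let ?P = "pol_P P0 P1" and ?r = "pol_r r0 r1 lam"
  define w where "w = pol_bias P0 P1 r0 r1 lam \<pi>"
  have stochastic: "row_stochastic (?P q)" for q by (rule row_stochastic_pol_P[OF P0 P1])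
  obtain g where gain_\<pi>: "\<And>s. pol_gain P0 P1 r0 r1 lam \<pi> s = g"
    and poisson: "\<And>s. g + w s = ?r \<pi> s + mat_vec (?P \<pi>) w s"
    using poisson_equation_unichain[OF stochastic unichain] unfolding w_def pol_gain_def pol_bias_def by metis
  obtain z where z: "w = (\<lambda>s. z s - mat_vec (?P \<pi>) z s)"
    using gain_bias_decomposition(2)[OF stochastic] unfolding w_def pol_bias_def by blast
  \<comment> \<open>Switching the action at \<open>s\<close> away from \<open>\<pi>\<close> costs exactly \<open>\<bar>act_adv \<pi> s\<bar> > 0\<close> in the Poisson equation.\<close>
  have slack: "?r q s + mat_vec (?P q) w s
      = g + w s - (if s \<in> q \<longleftrightarrow> s \<in> \<pi> then 0 else \<bar>act_adv P0 P1 r0 r1 lam \<pi> s\<bar>)" for q s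
    using poisson[of s] act_adv_eq[of P0 P1 r0 r1 lam \<pi> s] pos[of s] neg[of s]
    by (cases "s \<in> q"; cases "s \<in> \<pi>") (simp_all add: pol_r_def mat_vec_pol_P w_def)
  have super: "?r q s + mat_vec (?P q) w s \<le> g + w s" for q s
    using slack[of q s] by simp
  have tight: "?P q s = ?P \<pi> s" if "?r q s + mat_vec (?P q) w s = g + w s" for q s
    using slack[of q s] that pos[of s] neg[of s] by (auto simp: pol_P_def split: if_splits)
  have "pol_gain P0 P1 r0 r1 lam q s \<le> g" for q s
    unfolding pol_gain_def by (rule gain_le_of_poisson_supersolution[OF stochastic super])
  then have "gain_optimal P0 P1 r0 r1 lam \<pi>"
    unfolding gain_optimal_def gain_\<pi> by blast
  moreover have "pol_bias P0 P1 r0 r1 lam q s \<le> pol_bias P0 P1 r0 r1 lam \<pi> s"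
    if "gain_optimal P0 P1 r0 r1 lam q" for q s
  proof -
    have "bias (?P q) (?r q) s \<le> w s"
    proof (rule bias_le_of_poisson_supersolution[OF stochastic stochastic z])
      show "?r q t + mat_vec (?P q) w t \<le> g + w t" for t by (rule super)
      show "?P q t = ?P \<pi> t" if "?r q t + mat_vec (?P q) w t = g + w t" for t
        using that by (rule tight)
      show "g \<le> gain (?P q) (?r q) t" for t
        using that gain_\<pi>[of t] unfolding gain_optimal_def pol_gain_def by metis
    qed
    then show ?thesis by (simp add: pol_bias_def w_def)
  qed
  ultimately show ?thesis unfolding bias_optimal_def by blast
qed

lemma opt_act_adv_eq:
  assumes "bias_optimal P0 P1 r0 r1 lam \<pi>"
  shows "opt_act_adv P0 P1 r0 r1 lam s = act_adv P0 P1 r0 r1 lam \<pi> s"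
proof -
  define q where "q = (SOME q. bias_optimal P0 P1 r0 r1 lam q)"
  have "bias_optimal P0 P1 r0 r1 lam q" unfolding q_def using assms by (rule someI)
  \<comment> \<open>The choice made by \<open>SOME\<close> is irrelevant: bias-optimal policies dominate each other's bias.\<close>
  with assms have "pol_bias P0 P1 r0 r1 lam q = pol_bias P0 P1 r0 r1 lam \<pi>"
    unfolding bias_optimal_def by (intro ext order_antisym) blast+
  then show ?thesis unfolding opt_act_adv_def q_def[symmetric] act_adv_def by simp
qed

section \<open>Bounds on the activation advantage\<close>

lemma span_diff_const: "span (\<lambda>s. v s - c) = span (v :: 's::finite \<Rightarrow> real)"
  using Max_add_commute[of UNIV v "- c"] Min_add_commute[of UNIV v "- c"]
  by (simp add: span_def image_image)

lemma abs_mat_vec_diff_le_span: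
  fixes P0 P1 :: "'s::finite \<Rightarrow> 's \<Rightarrow> real"
  assumes "row_stochastic P0" and "row_stochastic P1"
  shows "\<bar>mat_vec P1 b s - mat_vec P0 b s\<bar> \<le> mat_norm (\<lambda>x y. P1 x y - P0 x y) * span b / 2"
proof -
  \<comment> \<open>The rows of \<open>P1 - P0\<close> sum to zero, so \<open>b\<close> may be recentred at the midpoint \<open>c\<close> of its range.\<close>
  define M m where "M = Max (range b)" and "m = Min (range b)"
  define c where "c = (M + m) / 2"
  have centred: "\<bar>b t - c\<bar> \<le> span b / 2" for t
  proof -
    have "m \<le> b t" and "b t \<le> M" unfolding M_def m_def by simp_all
    moreover have "span b = M - m" unfolding span_def M_def m_def ..
    ultimately show ?thesis by (simp add: c_def abs_le_iff field_simps)
  qed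
  have "(\<Sum>t\<in>UNIV. (P1 s t - P0 s t) * c) = 0"
    using assms by (simp add: row_stochastic_def sum_subtractf flip: sum_distrib_right)
  then have "mat_vec P1 b s - mat_vec P0 b s = (\<Sum>t\<in>UNIV. (P1 s t - P0 s t) * (b t - c))"
    by (simp add: mat_vec_def right_diff_distrib left_diff_distrib sum_subtractf)
  also have "\<bar>\<dots>\<bar> \<le> (\<Sum>t\<in>UNIV. \<bar>P1 s t - P0 s t\<bar> * (span b / 2))"
    by (rule order_trans[OF sum_abs sum_mono]) (simp only: abs_mult, rule mult_left_mono[OF centred], simp)
  also have "\<dots> = (\<Sum>t\<in>UNIV. \<bar>P1 s t - P0 s t\<bar>) * (span b / 2)"
    by (rule sum_distrib_right[symmetric])
  also have "\<dots> \<le> mat_norm (\<lambda>x y. P1 x y - P0 x y) * (span b / 2)"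
  proof (rule mult_right_mono)
    show "(\<Sum>t\<in>UNIV. \<bar>P1 s t - P0 s t\<bar>) \<le> mat_norm (\<lambda>x y. P1 x y - P0 x y)"
      unfolding mat_norm_def by simp
    show "0 \<le> span b / 2" using centred[of s] by (meson abs_ge_zero order_trans)
  qed
  finally show ?thesis by simp
qed

lemma act_adv_deviation_le:
  fixes P0 P1 :: "'s::finite \<Rightarrow> 's \<Rightarrow> real"
  assumes P0: "row_stochastic P0" and P1: "row_stochastic P1"
    and "unichain (pol_P P0 P1 q)"
  shows "\<bar>act_adv P0 P1 r0 r1 lam q s - (r1 s - lam - r0 s)\<bar>
    \<le> span (pol_r r0 r1 lam q) * diameter (pol_P P0 P1 q) * mat_norm (\<lambda>x y. P1 x y - P0 x y) / 2"
proof -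
  let ?b = "pol_bias P0 P1 r0 r1 lam q" and ?m = "mat_norm (\<lambda>x y. P1 x y - P0 x y)"
  have "0 \<le> ?m"
    unfolding mat_norm_def by (rule order_trans[OF _ Max_ge[of _ "\<Sum>t\<in>UNIV. \<bar>P1 s t - P0 s t\<bar>"]])
      (auto intro: sum_nonneg)
  have "\<bar>act_adv P0 P1 r0 r1 lam q s - (r1 s - lam - r0 s)\<bar> = \<bar>mat_vec P1 ?b s - mat_vec P0 ?b s\<bar>"
    by (simp add: act_adv_eq)
  also have "\<dots> \<le> ?m * span ?b / 2"
    by (rule abs_mat_vec_diff_le_span[OF P0 P1])
  also have "\<dots> \<le> ?m * (span (pol_r r0 r1 lam q) * diameter (pol_P P0 P1 q)) / 2"
    using span_bias_le[OF row_stochastic_pol_P[OF P0 P1] assms(3)] \<open>0 \<le> ?m\<close>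
    unfolding pol_bias_def by (intro divide_right_mono mult_left_mono) simp_all
  finally show ?thesis by (simp add: mult_ac)
qed

lemma opt_act_adv_neg_above_bound:
  fixes P0 P1 :: "'s::finite \<Rightarrow> 's \<Rightarrow> real"
  assumes "row_stochastic P0" and "row_stochastic P1" and "unichain (pol_P P0 P1 {})"
    and "sup_norm (\<lambda>x. r1 x - r0 x) + span r0 * diameter P0 * mat_norm (\<lambda>x y. P1 x y - P0 x y) / 2 < lam"
  shows "opt_act_adv P0 P1 r0 r1 lam s < 0"
proof -
  have "act_adv P0 P1 r0 r1 lam {} t < 0" for t
  proof -
    have "\<bar>act_adv P0 P1 r0 r1 lam {} t - (r1 t - lam - r0 t)\<bar>
        \<le> span r0 * diameter P0 * mat_norm (\<lambda>x y. P1 x y - P0 x y) / 2"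
      using act_adv_deviation_le[OF assms(1-3), of r0 r1 lam t] by (simp add: pol_P_def pol_r_def)
    moreover have "\<bar>r1 t - r0 t\<bar> \<le> sup_norm (\<lambda>x. r1 x - r0 x)" unfolding sup_norm_def by simp
    ultimately show ?thesis using assms(4) unfolding abs_le_iff by linarith
  qed
  then show ?thesis using opt_act_adv_eq[OF bias_optimalI[OF assms(1-3)]] by simp
qed

lemma opt_act_adv_pos_below_bound:
  fixes P0 P1 :: "'s::finite \<Rightarrow> 's \<Rightarrow> real"
  assumes "row_stochastic P0" and "row_stochastic P1" and "unichain (pol_P P0 P1 UNIV)"
    and "lam < - sup_norm (\<lambda>x. r1 x - r0 x) - span r1 * diameter P1 * mat_norm (\<lambda>x y. P1 x y - P0 x y) / 2"
  shows "opt_act_adv P0 P1 r0 r1 lam s > 0"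
proof -
  have "act_adv P0 P1 r0 r1 lam UNIV t > 0" for t
  proof -
    have "\<bar>act_adv P0 P1 r0 r1 lam UNIV t - (r1 t - lam - r0 t)\<bar>
        \<le> span r1 * diameter P1 * mat_norm (\<lambda>x y. P1 x y - P0 x y) / 2"
      using act_adv_deviation_le[OF assms(1-3), of r0 r1 lam t]
      by (simp add: pol_P_def pol_r_def span_diff_const)
    moreover have "\<bar>r1 t - r0 t\<bar> \<le> sup_norm (\<lambda>x. r1 x - r0 x)" unfolding sup_norm_def by simp
    ultimately show ?thesis using assms(4) unfolding abs_le_iff by linarith
  qed
  then show ?thesis using opt_act_adv_eq[OF bias_optimalI[OF assms(1-3)]] by simp
qed

theorem mainTheorem4:
  fixes P0 P1 :: "'s::finite \<Rightarrow> 's \<Rightarrow> real" and r0 r1 :: "'s \<Rightarrow> real"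
  assumes "row_stochastic P0" and "row_stochastic P1"
    and "unichain (pol_P P0 P1 UNIV)" and "unichain (pol_P P0 P1 {})"
    and "indexable P0 P1 r0 r1"
    and "is_whittle_index P0 P1 r0 r1 s l"
  shows "- sup_norm (\<lambda>x. r1 x - r0 x) - span r1 * diameter P1 * mat_norm (\<lambda>x y. P1 x y - P0 x y) / 2 \<le> l
       \<and> l \<le> sup_norm (\<lambda>x. r1 x - r0 x) + span r0 * diameter P0 * mat_norm (\<lambda>x y. P1 x y - P0 x y) / 2"
proof
  let ?d = "sup_norm (\<lambda>x. r1 x - r0 x)" and ?m = "mat_norm (\<lambda>x y. P1 x y - P0 x y)"
  \<comment> \<open>Only the index of \<open>s\<close> is used.\<close>
  show "- ?d - span r1 * diameter P1 * ?m / 2 \<le> l"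
  proof (rule dense_ge)
    fix lam assume "l < lam"
    with assms(6) have "opt_act_adv P0 P1 r0 r1 lam s < 0" unfolding is_whittle_index_def by blast
    with opt_act_adv_pos_below_bound[OF assms(1,2,3), where lam = lam]
    show "- ?d - span r1 * diameter P1 * ?m / 2 \<le> lam" by (meson not_le less_asym)
  qed
  show "l \<le> ?d + span r0 * diameter P0 * ?m / 2"
  proof (rule dense_le)
    fix lam assume "lam < l"
    with assms(6) have "0 < opt_act_adv P0 P1 r0 r1 lam s" unfolding is_whittle_index_def by blast
    with opt_act_adv_neg_above_bound[OF assms(1,2,4), where lam = lam]
    show "lam \<le> ?d + span r0 * diameter P0 * ?m / 2" by (meson not_le less_asym)
  qed
qed

end
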